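(* Let $m=2k$ with $k$ a positive integer, let $n$ be a positive integer, and let $\{B_1,\dots,B_{k(n-1)+1}\}$ be a basis for $\Gamma_{k,n}$. For each $i$, let $\hat B_i$ be the $m\times n$ matrix $\begin{pmatrix} B_i\\ B_i^\pi\end{pmatrix}$ (the $k\times n$ block $B_i$ stacked on top of the $k\times n$ block $B_i^\pi$). Then $\{\hat B_1,\dots,\hat B_{k(n-1)+1}\}$ is a basis for $\Gamma^\pi_{m,n}$.
   Context: A real matrix is stochastic if its entries are nonnegative and each row sums to $1$. $\Gamma_{k,n}$ is the set of $k\times n$ stochastic matrices. For $A=(a_{i,j})\in M_{p,n}$, $A^\pi$ is the $p\times n$ matrix with $(A^\pi)_{i,j}=a_{p+1-i,n+1-j}$; $A$ is centrosymmetric if $A=A^\pi$. $\Gamma^\pi_{m,n}$ is the set of $m\times n$ centrosymmetric stochastic matrices; it is an affine set of dimension $k(n-1)$. A basis for such a set $\Gamma$ of affine dimension $d$ means a set of $d+1$ linearly independent elements of $\Gamma$ whose linear span contains $\Gamma$. *)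

theory Defs
  imports Complex_Main
begin

text \<open>A p x n real matrix is represented as a function nat => nat => real;
  only the entries with row index < p and column index < n (0-based) matter.\<close>

type_synonym mat = "nat \<Rightarrow> nat \<Rightarrow> real"

definition stochastic :: "nat \<Rightarrow> nat \<Rightarrow> mat \<Rightarrow> bool" where
  "stochastic p n A \<longleftrightarrow>
     (\<forall>i<p. \<forall>j<n. 0 \<le> A i j) \<and> (\<forall>i<p. (\<Sum>j<n. A i j) = 1)"

definition Gamma :: "nat \<Rightarrow> nat \<Rightarrow> mat set" where
  "Gamma p n = {A. stochastic p n A}"

text \<open>A^pi with (A^pi)_{i,j} = a_{p+1-i,n+1-j} (1-based), i.e. a_{p-1-i,n-1-j} 0-based.\<close>
definition pi_mat :: "nat \<Rightarrow> nat \<Rightarrow> mat \<Rightarrow> mat" where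
  "pi_mat p n A = (\<lambda>i j. A (p - 1 - i) (n - 1 - j))"

definition centrosymmetric :: "nat \<Rightarrow> nat \<Rightarrow> mat \<Rightarrow> bool" where
  "centrosymmetric p n A \<longleftrightarrow> (\<forall>i<p. \<forall>j<n. A i j = pi_mat p n A i j)"

definition Gamma_pi :: "nat \<Rightarrow> nat \<Rightarrow> mat set" where
  "Gamma_pi p n = {A. stochastic p n A \<and> centrosymmetric p n A}"

definition lin_indep_mats :: "nat \<Rightarrow> nat \<Rightarrow> nat \<Rightarrow> (nat \<Rightarrow> mat) \<Rightarrow> bool" where
  "lin_indep_mats p n N B \<longleftrightarrow>
     (\<forall>c::nat \<Rightarrow> real. (\<forall>i<p. \<forall>j<n. (\<Sum>t<N. c t * B t i j) = 0) \<longrightarrow> (\<forall>t<N. c t = 0))"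

definition in_span_mats :: "nat \<Rightarrow> nat \<Rightarrow> nat \<Rightarrow> (nat \<Rightarrow> mat) \<Rightarrow> mat \<Rightarrow> bool" where
  "in_span_mats p n N B A \<longleftrightarrow>
     (\<exists>c::nat \<Rightarrow> real. \<forall>i<p. \<forall>j<n. A i j = (\<Sum>t<N. c t * B t i j))"

definition is_basis_mats :: "nat \<Rightarrow> nat \<Rightarrow> mat set \<Rightarrow> nat \<Rightarrow> (nat \<Rightarrow> mat) \<Rightarrow> bool" where
  "is_basis_mats p n S N B \<longleftrightarrow>
     (\<forall>t<N. B t \<in> S) \<and> lin_indep_mats p n N B \<and> (\<forall>A\<in>S. in_span_mats p n N B A)"

definition stack_pi :: "nat \<Rightarrow> nat \<Rightarrow> mat \<Rightarrow> mat" where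
  "stack_pi k n B = (\<lambda>i j. if i < k then B i j else pi_mat k n B (i - k) j)"

end

theory Submission
  imports Defs
begin

(* A centrosymmetric 2k x n matrix is the stack of its top k x n block A over A^pi, and
   A is stochastic exactly when that stack is.  Since stacking is linear, linear relations
   among the stacked matrices are relations among their top blocks and conversely, so
   independence and spanning transfer from Gamma_{k,n} to Gamma^pi_{2k,n}. *)

lemma sum_lessThan_reflect:
  fixes f :: "nat \<Rightarrow> 'a::comm_monoid_add"
  shows "(\<Sum>j<n. f (n - 1 - j)) = (\<Sum>j<n. f j)"
  by (rule sum.reindex_bij_witness[where i = "\<lambda>j. n - 1 - j" and j = "\<lambda>j. n - 1 - j"]) auto

lemma stochastic_pi_mat:
  assumes "stochastic p n A"
  shows "stochastic p n (pi_mat p n A)"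
  using assms sum_lessThan_reflect[of "A (p - 1 - i)" n for i]
  by (auto simp: stochastic_def pi_mat_def)

lemma stochastic_fewer_rows:
  assumes "stochastic p n A" and "q \<le> p"
  shows "stochastic q n A"
  using assms by (auto simp: stochastic_def)

lemma stack_pi_top [simp]: "i < k \<Longrightarrow> stack_pi k n B i j = B i j"
  by (simp add: stack_pi_def)

lemma stack_pi_bottom:
  assumes "k \<le> i" and "i < 2 * k"
  shows "stack_pi k n B i j = B (2 * k - 1 - i) (n - 1 - j)"
proof -
  have "k - 1 - (i - k) = 2 * k - 1 - i"
    using assms by simp
  then show ?thesis
    using assms by (simp add: stack_pi_def pi_mat_def)
qed

lemma stack_pi_cong:
  assumes "\<forall>i<k. \<forall>j<n. A i j = A' i j" and "i < 2 * k" and "j < n"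
  shows "stack_pi k n A i j = stack_pi k n A' i j"
  using assms by (cases "i < k") (simp_all add: stack_pi_bottom)

lemma stack_pi_lincomb:
  "(\<Sum>t<N. c t * stack_pi k n (B t) i j) = stack_pi k n (\<lambda>i j. \<Sum>t<N. c t * B t i j) i j"
  by (simp add: stack_pi_def pi_mat_def)

lemma stochastic_stack_pi:
  assumes "stochastic k n B"
  shows "stochastic (2 * k) n (stack_pi k n B)"
proof -
  have pi: "stochastic k n (pi_mat k n B)"
    using assms by (rule stochastic_pi_mat)
  have "(\<forall>j<n. 0 \<le> stack_pi k n B i j) \<and> (\<Sum>j<n. stack_pi k n B i j) = 1"
    if "i < 2 * k" for i
  proof (cases "i < k")
    case True
    with assms show ?thesis
      by (simp add: stochastic_def)
  next
    case False
    with that have "i - k < k"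
      by simp
    with False pi show ?thesis
      by (simp add: stochastic_def stack_pi_def)
  qed
  then show ?thesis
    by (simp add: stochastic_def)
qed

lemma centrosymmetric_stack_pi: "centrosymmetric (2 * k) n (stack_pi k n B)"
  unfolding centrosymmetric_def pi_mat_def
proof (intro allI impI)
  fix i j
  assume "i < 2 * k" and "j < n"
  then show "stack_pi k n B i j = stack_pi k n B (2 * k - 1 - i) (n - 1 - j)"
    by (cases "i < k") (simp_all add: stack_pi_bottom)
qed

lemma centrosymmetric_eq_stack_pi:
  assumes "centrosymmetric (2 * k) n A" and "i < 2 * k" and "j < n"
  shows "A i j = stack_pi k n A i j"
proof (cases "i < k")
  case False
  have "A i j = A (2 * k - 1 - i) (n - 1 - j)"
    using assms unfolding centrosymmetric_def pi_mat_def by blast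
  with False assms(2) show ?thesis
    by (simp add: stack_pi_bottom)
qed simp

lemma Gamma_pi_top_block: "A \<in> Gamma_pi (2 * k) n \<Longrightarrow> A \<in> Gamma k n"
  by (auto simp: Gamma_def Gamma_pi_def intro: stochastic_fewer_rows)

lemma stack_pi_in_Gamma_pi: "B \<in> Gamma k n \<Longrightarrow> stack_pi k n B \<in> Gamma_pi (2 * k) n"
  by (simp add: Gamma_def Gamma_pi_def stochastic_stack_pi centrosymmetric_stack_pi)

lemma lin_indep_mats_stack_pi:
  assumes "lin_indep_mats k n N B"
  shows "lin_indep_mats (2 * k) n N (\<lambda>t. stack_pi k n (B t))"
  unfolding lin_indep_mats_def
proof (rule allI, rule impI)
  fix c :: "nat \<Rightarrow> real"
  assume stacked: "\<forall>i<2 * k. \<forall>j<n. (\<Sum>t<N. c t * stack_pi k n (B t) i j) = 0"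
  have "(\<Sum>t<N. c t * B t i j) = 0" if "i < k" and "j < n" for i j
    using stacked[rule_format, of i j] that by simp
  with assms show "\<forall>t<N. c t = 0"
    by (simp add: lin_indep_mats_def)
qed

lemma in_span_mats_stack_pi:
  assumes "in_span_mats k n N B A"
  shows "in_span_mats (2 * k) n N (\<lambda>t. stack_pi k n (B t)) (stack_pi k n A)"
proof -
  obtain c where "\<forall>i<k. \<forall>j<n. A i j = (\<Sum>t<N. c t * B t i j)"
    using assms by (auto simp: in_span_mats_def)
  then have "\<forall>i<2 * k. \<forall>j<n. stack_pi k n A i j = (\<Sum>t<N. c t * stack_pi k n (B t) i j)"
    by (simp add: stack_pi_lincomb stack_pi_cong)
  then show ?thesis
    by (auto simp: in_span_mats_def)
qed

lemma in_span_mats_cong: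
  assumes "\<forall>i<p. \<forall>j<n. A i j = A' i j" and "in_span_mats p n N B A'"
  shows "in_span_mats p n N B A"
  using assms by (simp add: in_span_mats_def)

theorem mainTheorem9:
  fixes k n :: nat and B :: "nat \<Rightarrow> mat"
  assumes "0 < k" and "0 < n"
    and "is_basis_mats k n (Gamma k n) (k * (n - 1) + 1) B"
  shows "is_basis_mats (2 * k) n (Gamma_pi (2 * k) n) (k * (n - 1) + 1) (\<lambda>t. stack_pi k n (B t))"
proof -
  let ?N = "k * (n - 1) + 1"
  have members: "\<forall>t<?N. B t \<in> Gamma k n" and indep: "lin_indep_mats k n ?N B"
    and spans: "\<forall>A\<in>Gamma k n. in_span_mats k n ?N B A"
    using assms(3) by (auto simp: is_basis_mats_def)
  have "in_span_mats (2 * k) n ?N (\<lambda>t. stack_pi k n (B t)) A" if A: "A \<in> Gamma_pi (2 * k) n" for A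
  proof (rule in_span_mats_cong)
    show "\<forall>i<2 * k. \<forall>j<n. A i j = stack_pi k n A i j"
      using A by (auto simp: Gamma_pi_def intro: centrosymmetric_eq_stack_pi)
    show "in_span_mats (2 * k) n ?N (\<lambda>t. stack_pi k n (B t)) (stack_pi k n A)"
      using A spans by (blast intro: in_span_mats_stack_pi Gamma_pi_top_block)
  qed
  then show ?thesis
    using members indep by (simp add: is_basis_mats_def stack_pi_in_Gamma_pi lin_indep_mats_stack_pi)
qed

end
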